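(* Let $n\in\mathbb{N}$, let $a\ge2$ be an integer, $k_1,\ldots,k_n\in\mathbb{N}$, $K=\operatorname{lcm}(k_1,\ldots,k_n)$, and put $P(j)=\prod_{i=1}^n\bigl(\sum_{d_i|k_i,\ d_i^a|j}\phi(d_i)\bigr)$ for $j\in\mathbb{N}_0$. For each tuple $d_1|k_1,\ldots,d_n|k_n$ write $M=\operatorname{lcm}(d_1,\ldots,d_n)$ and $L=K/M$. Then $$\sum_{j=1}^{K^a}\log\Gamma\Bigl(\frac{j}{K^a}\Bigr)P(j)=\frac{K^a}{2}\log(2\pi)\sum_{d_1|k_1,\ldots,d_n|k_n}\frac{\prod_i\phi(d_i)}{M^a}-\frac{k_1\cdots k_n}{2}\log(2\pi K^a)+\frac a2\sum_{d_1|k_1,\ldots,d_n|k_n}(\log M)\prod_i\phi(d_i),$$ $$\sum_{j=0}^{K^a}\binom{K^a}{j}P(j)=2^{K^a}\sum_{d_1|k_1,\ldots,d_n|k_n}\frac{\phi(d_1)\cdots\phi(d_n)}{M^a}\sum_{\ell=1}^{M^a}(-1)^{\ell L^a}\cos^{K^a}\Bigl(\frac{\pi\ell}{M^a}\Bigr),$$ for every integer $m\ge0$, $$\sum_{j=0}^{K^a-1}B_m\Bigl(\frac{j}{K^a}\Bigr)P(j)=\frac{B_m}{K^{a(m-1)}}\sum_{d_1|k_1,\ldots,d_n|k_n}M^{a(m-1)}\phi(d_1)\cdots\phi(d_n),$$ and in particular $\sum_{j=0}^{K^a-1}B_1\bigl(\frac{j}{K^a}\bigr)P(j)=-\frac{k_1\cdots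 k_n}{2}$.
   Context: $\phi$ is Euler's totient function; for $j=0$ every $d^a$ divides $j$. $\Gamma$ is the Gamma function. The Bernoulli polynomials are defined by $\frac{te^{xt}}{e^t-1}=\sum_{m\ge0}B_m(x)\frac{t^m}{m!}$ and $B_m=B_m(0)$ (so $B_1=-1/2$). *)

theory Defs
  imports "HOL-Analysis.Analysis" "HOL-Computational_Algebra.Formal_Power_Series" "HOL-Number_Theory.Number_Theory"
begin

definition bernpoly :: "nat \<Rightarrow> real \<Rightarrow> real" where
  "bernpoly m x = fact m * fps_nth (fps_X * fps_exp x / (fps_exp 1 - 1)) m"

text \<open>Bernoulli numbers B_m = B_m(0) (so B_1 = -1/2).\<close>
definition bernoulli :: "nat \<Rightarrow> real" where
  "bernoulli m = bernpoly m 0"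

definition divtuples :: "nat \<Rightarrow> (nat \<Rightarrow> nat) \<Rightarrow> (nat \<Rightarrow> nat) set" where
  "divtuples n k = PiE {1..n} (\<lambda>i. {d. d dvd k i})"

definition Pfun :: "nat \<Rightarrow> nat \<Rightarrow> (nat \<Rightarrow> nat) \<Rightarrow> nat \<Rightarrow> nat" where
  "Pfun n a k j = (\<Prod>i=1..n. \<Sum>d\<in>{d. d dvd k i \<and> d ^ a dvd j}. totient d)"

end

theory Submission
  imports Defs "HOL-Computational_Algebra.Fundamental_Theorem_Algebra"
begin

text \<open>
  Since \<open>d\<^sub>i\<^sup>a\<close> divides \<open>j\<close> for all \<open>i\<close> iff \<open>lcm(d\<^sub>1, \<dots>, d\<^sub>n)\<^sup>a\<close> does, multiplying out
  the factors of \<open>P\<close> gives \<open>P(j) = \<Sum>\<^sub>d \<phi>(d\<^sub>1)\<cdots>\<phi>(d\<^sub>n) [M\<^sup>a | j]\<close>. Each weighted sum over \<open>j\<close>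
  therefore splits into sums over the multiples \<open>j = M\<^sup>a l\<close>, for which \<open>j / K\<^sup>a = l / L\<^sup>a\<close>.
  These are evaluated by Gauss' multiplication formula for \<open>\<Gamma>\<close> at the points \<open>l / q\<close>
  (from the reflection formula and \<open>\<Prod>\<^sub>0\<^sub><\<^sub>l\<^sub><\<^sub>q 2 sin(\<pi> l / q) = q\<close>), by the
  roots-of-unity filter for binomial coefficients, and by Raabe's multiplication theorem
  \<open>\<Sum>\<^sub>l\<^sub><\<^sub>q B\<^sub>m(l / q) = q\<^sup>1\<^sup>-\<^sup>m B\<^sub>m\<close>.
\<close>

subsection \<open>Raabe's multiplication theorem\<close>

definition bernpoly_egf :: "real \<Rightarrow> real fps" where
  "bernpoly_egf x = fps_X * fps_exp x / (fps_exp 1 - 1)"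

lemma bernpoly_conv_egf: "bernpoly m x = fact m * fps_nth (bernpoly_egf x) m"
  by (simp add: bernpoly_def bernpoly_egf_def)

lemma bernpoly_egf_times_denominator:
  "bernpoly_egf x * (fps_exp 1 - 1) = fps_X * fps_exp x"
proof -
  have "subdegree (fps_exp (1::real) - 1) = 1"
    by (rule subdegreeI) auto
  moreover have "subdegree (fps_X * fps_exp x) = 1"
    by (simp add: subdegree_mult)
  ultimately have "fps_exp 1 - 1 dvd fps_X * fps_exp x"
    by (subst fps_dvd_iff) auto
  thus ?thesis
    unfolding bernpoly_egf_def by simp
qed

lemma sum_bernpoly_egf_fractions:
  assumes q: "q > 0"
  shows "(\<Sum>l<q. bernpoly_egf (real l / real q)) =
           fps_const (real q) * (bernpoly_egf 0 oo (fps_const (1 / real q) * fps_X))"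
    (is "?S = ?R")
proof -
  \<comment> \<open>Both sides solve \<open>F * (e\<^sup>X\<^sup>/\<^sup>q - 1) = X\<close>.\<close>
  define y :: "real fps" where "y = fps_exp (1 / real q)"
  have y_power: "y ^ l = fps_exp (real l / real q)" for l
    by (simp add: y_def fps_exp_power_mult)
  have "y \<noteq> 1"
    using q by (simp add: y_def)
  have "?S * (fps_exp 1 - 1) = fps_X * (\<Sum>l<q. y ^ l)"
    unfolding sum_distrib_right sum_distrib_left
    by (intro sum.cong refl) (simp add: bernpoly_egf_times_denominator y_power)
  hence "?S * (y - 1) * (fps_exp 1 - 1) = fps_X * (y ^ q - 1)"
    by (simp add: power_diff_1_eq mult_ac)
  also have "y ^ q = fps_exp 1"
    using q by (simp add: y_power)
  finally have S: "?S * (y - 1) = fps_X"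
    by simp
  have c0: "fps_nth (fps_const (1 / real q) * fps_X) 0 = 0"
    by simp
  have "(bernpoly_egf 0 oo (fps_const (1 / real q) * fps_X)) * (y - 1) =
        (bernpoly_egf 0 * (fps_exp 1 - 1)) oo (fps_const (1 / real q) * fps_X)"
    by (simp add: fps_compose_mult_distrib[OF c0] fps_compose_sub_distrib y_def)
  also have "\<dots> = fps_const (1 / real q) * fps_X"
    by (simp add: bernpoly_egf_times_denominator)
  finally have "?R * (y - 1) = fps_const (real q) * (fps_const (1 / real q) * fps_X)"
    by (simp add: mult.assoc)
  also have "\<dots> = fps_X"
    using q by (simp flip: mult.assoc fps_const_mult)
  finally have R: "?R * (y - 1) = fps_X" .
  with S \<open>y \<noteq> 1\<close> show ?thesis
    by (metis mult_right_cancel right_minus_eq)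
qed

lemma sum_bernpoly_fractions:
  assumes "q > 0"
  shows "(\<Sum>l<q. bernpoly m (real l / real q)) = bernoulli m * real q powi (1 - int m)"
proof -
  have "(\<Sum>l<q. bernpoly m (real l / real q)) =
        fact m * fps_nth (\<Sum>l<q. bernpoly_egf (real l / real q)) m"
    by (simp add: bernpoly_conv_egf sum_distrib_left fps_sum_nth)
  also have "\<dots> = real q * (1 / real q) ^ m * bernoulli m"
    using assms by (simp add: sum_bernpoly_egf_fractions fps_compose_linear bernoulli_def
        bernpoly_conv_egf)
  also have "real q * (1 / real q) ^ m = real q powi (1 - int m)"
    using assms by (simp add: power_int_diff power_int_of_nat field_simps)
  finally show ?thesis
    by simp
qed

lemma bernoulli_one: "bernoulli 1 = - 1 / 2"
proof -
  have e: "bernpoly_egf 0 * (fps_exp 1 - 1) = fps_X"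
    using bernpoly_egf_times_denominator[of 0] by simp
  have "fps_nth (bernpoly_egf 0 * (fps_exp 1 - 1)) 1 = fps_nth (bernpoly_egf 0) 0"
    by (simp add: fps_mult_nth)
  moreover have "fps_nth (bernpoly_egf 0 * (fps_exp 1 - 1)) 2 =
      fps_nth (bernpoly_egf 0) 0 / 2 + fps_nth (bernpoly_egf 0) 1"
    by (simp add: fps_mult_nth numeral_2_eq_2)
  ultimately have "fps_nth (bernpoly_egf 0) 1 = - 1 / 2"
    by (simp add: e)
  thus ?thesis
    by (simp add: bernoulli_def bernpoly_conv_egf)
qed

subsection \<open>Gauss' multiplication formula at rational points\<close>

lemma prod_one_minus_nontrivial_roots_unity:
  assumes q: "q > 0"
  shows "(\<Prod>z\<in>{z::complex. z ^ q = 1} - {1}. 1 - z) = of_nat q"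
proof -
  define R where "R = {z::complex. z ^ q = 1}"
  define p :: "complex poly" where "p = Polynomial.monom 1 q + [:-1:]"
  have poly_p: "poly p x = x ^ q - 1" for x
    by (simp add: p_def poly_monom)
  have "degree p = q"
    using q by (simp add: p_def degree_add_eq_left degree_monom_eq)
  hence "lead_coeff p = 1"
    using q by (cases q) (simp_all add: p_def coeff_monom)
  moreover have "rsquarefree p"
    unfolding rsquarefree_roots
  proof (intro allI notI)
    fix z assume "poly p z = 0 \<and> poly (pderiv p) z = 0"
    hence "z ^ q = 1" "of_nat q * z ^ (q - 1) = 0"
      by (auto simp: poly_p p_def pderiv_add pderiv_pCons pderiv_monom poly_monom)
    thus False
      using q by (cases "z = 0") (auto simp: power_0_left)
  qed
  moreover have "{z. poly p z = 0} = R"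
    by (auto simp: poly_p R_def)
  ultimately have "p = (\<Prod>z\<in>R. [:-z, 1:])"
    using complex_poly_decompose_rsquarefree[of p] by simp
  also have "\<dots> = [:-1, 1:] * (\<Prod>z\<in>R - {1}. [:-z, 1:])"
    using q by (intro prod.remove) (auto simp: R_def finite_roots_unity)
  finally have factor: "p = [:-1, 1:] * (\<Prod>z\<in>R - {1}. [:-z, 1:])" .
  have "p = [:-1, 1:] * (\<Sum>i<q. Polynomial.monom 1 i)"
    by (rule poly_ext) (simp add: poly_p poly_sum poly_monom power_diff_1_eq left_diff_distrib)
  with factor have "(\<Sum>i<q. Polynomial.monom 1 i) = (\<Prod>z\<in>R - {1}. [:-z, 1:])"
    by (metis mult_left_cancel pCons_eq_0_iff zero_neq_one)
  hence "poly (\<Sum>i<q. Polynomial.monom 1 i) 1 = poly (\<Prod>z\<in>R - {1}. [:-z, 1:]) 1"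
    by simp
  thus ?thesis
    by (simp add: R_def poly_sum poly_monom poly_prod)
qed

lemma norm_one_minus_cis:
  assumes "0 \<le> t" "t \<le> 2 * pi"
  shows "norm (1 - cis t) = 2 * sin (t / 2)"
proof -
  have "sin (t / 2) \<ge> 0"
    using assms by (intro sin_ge_zero) auto
  moreover have "(norm (1 - cis t))\<^sup>2 = (2 * sin (t / 2))\<^sup>2"
  proof -
    have "(norm (1 - cis t))\<^sup>2 = (1 - cos t)\<^sup>2 + (sin t)\<^sup>2"
      by (simp add: cmod_def)
    also have "\<dots> = 2 - 2 * cos t"
      using sin_cos_squared_add[of t] by (simp add: power2_eq_square algebra_simps)
    also have "cos t = 1 - 2 * (sin (t / 2))\<^sup>2"
      using cos_double_sin[of "t / 2"] by simp
    finally show ?thesis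
      by (simp add: power2_eq_square)
  qed
  ultimately show ?thesis
    by (metis norm_ge_zero power2_eq_imp_eq mult_nonneg_nonneg zero_le_numeral)
qed

lemma prod_sin_fractions:
  assumes q: "q > 0"
  shows "(\<Prod>l=1..<q. 2 * sin (pi * real l / real q)) = real q"
proof -
  define \<zeta> where "\<zeta> l = cis (2 * pi * real l / real q)" for l
  have bij: "bij_betw \<zeta> {..<q} {z. z ^ q = 1}"
    unfolding \<zeta>_def using q by (rule Complex.bij_betw_roots_unity)
  hence "bij_betw \<zeta> ({..<q} - {0}) ({z. z ^ q = 1} - {\<zeta> 0})"
    using q by (intro bij_betw_DiffI) (auto simp: bij_betw_def \<zeta>_def)
  moreover have "{..<q} - {0} = {1..<q}" "\<zeta> 0 = 1"
    by (auto simp: \<zeta>_def)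
  ultimately have "(\<Prod>l=1..<q. 1 - \<zeta> l) = of_nat q"
    using prod_one_minus_nontrivial_roots_unity[OF q] prod.reindex_bij_betw[of \<zeta> _ _ "\<lambda>z. 1 - z"]
    by simp
  hence "(\<Prod>l=1..<q. norm (1 - \<zeta> l)) = real q"
    by (metis norm_of_nat prod_norm)
  moreover have "norm (1 - \<zeta> l) = 2 * sin (pi * real l / real q)" if "l \<in> {1..<q}" for l
    using that unfolding \<zeta>_def by (subst norm_one_minus_cis) (auto simp: field_simps)
  ultimately show ?thesis
    by (metis (no_types, lifting) prod.cong)
qed

lemma Gamma_reflection_real:
  assumes "0 < x" "x < (1::real)"
  shows "Gamma x * Gamma (1 - x) = pi / sin (pi * x)"
proof -
  have "1 - complex_of_real x = of_real (1 - x)"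
    by simp
  hence "complex_of_real (Gamma x * Gamma (1 - x)) =
         Gamma (complex_of_real x) * Gamma (1 - complex_of_real x)"
    by (simp only: Gamma_complex_of_real of_real_mult)
  also have "\<dots> = of_real pi / sin (of_real pi * of_real x)"
    by (rule Gamma_reflection_complex)
  also have "\<dots> = complex_of_real (pi / sin (pi * x))"
    by (simp flip: of_real_mult add: sin_of_real)
  finally show ?thesis
    by (simp only: of_real_eq_iff)
qed

lemma prod_Gamma_fractions_squared:
  assumes q: "q > 0"
  shows "(\<Prod>l=1..<q. Gamma (real l / real q) ^ 2) = (2 * pi) ^ (q - 1) / real q"
proof -
  have "(\<Prod>l=1..<q. Gamma (real l / real q)) = (\<Prod>l=1..<q. Gamma (real (q + 1 - Suc l) / real q))"
    by (rule prod.atLeastLessThan_rev)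
  also have "\<dots> = (\<Prod>l=1..<q. Gamma (1 - real l / real q))"
    using q by (intro prod.cong refl) (auto simp: of_nat_diff field_simps)
  finally have "(\<Prod>l=1..<q. Gamma (real l / real q) ^ 2) =
                (\<Prod>l=1..<q. Gamma (real l / real q) * Gamma (1 - real l / real q))"
    by (simp add: power2_eq_square prod.distrib)
  also have "\<dots> = (\<Prod>l=1..<q. 2 * pi / (2 * sin (pi * real l / real q)))"
    by (intro prod.cong refl, subst Gamma_reflection_real) (auto simp: field_simps)
  also have "\<dots> = (\<Prod>l=1..<q. 2 * pi) / (\<Prod>l=1..<q. 2 * sin (pi * real l / real q))"
    by (rule prod_dividef)
  also have "\<dots> = (2 * pi) ^ (q - 1) / real q"
    by (simp only: prod_sin_fractions[OF q]) simp
  finally show ?thesis .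
qed

lemma sum_ln_Gamma_fractions:
  assumes q: "q > 0"
  shows "(\<Sum>l=1..q. ln (Gamma (real l / real q))) = (real q - 1) / 2 * ln (2 * pi) - ln (real q) / 2"
proof -
  have Gamma_pos: "Gamma (real l / real q) > 0" if "l \<in> {1..<q}" for l
    using that by (intro Gamma_real_pos) auto
  have "2 * (\<Sum>l=1..<q. ln (Gamma (real l / real q))) = (\<Sum>l=1..<q. ln (Gamma (real l / real q) ^ 2))"
    by (simp add: sum_distrib_left ln_realpow Gamma_pos)
  also have "\<dots> = ln (\<Prod>l=1..<q. Gamma (real l / real q) ^ 2)"
    by (intro ln_prod[symmetric]) (auto simp: Gamma_pos[THEN less_imp_neq, symmetric])
  also have "\<dots> = ln ((2 * pi) ^ (q - 1)) - ln (real q)"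
    unfolding prod_Gamma_fractions_squared[OF q] using q by (intro ln_divide_pos) auto
  also have "\<dots> = real (q - 1) * ln (2 * pi) - ln (real q)"
    by (subst ln_realpow) auto
  finally have "(\<Sum>l=1..<q. ln (Gamma (real l / real q))) = (real q - 1) / 2 * ln (2 * pi) - ln (real q) / 2"
    using q by (simp add: of_nat_diff)
  moreover have "{1..q} = insert q {1..<q}"
    using q by auto
  ultimately show ?thesis
    using q by simp
qed

subsection \<open>The roots-of-unity filter\<close>

lemma sum_roots_unity_power_filter:
  assumes d: "d > 0"
  shows "(\<Sum>l=1..d. cis (2 * pi * real l * real j / real d)) = (if d dvd j then of_nat d else 0)"
proof -
  define z where "z = cis (2 * pi * real j / real d)"
  have z_power: "cis (2 * pi * real l * real j / real d) = z ^ l" for l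
    by (simp only: z_def Complex.DeMoivre) (simp add: mult_ac)
  show ?thesis
  proof (cases "d dvd j")
    case True
    then obtain t where "j = d * t" ..
    hence "2 * pi * real j / real d = 2 * pi * real t"
      using d by simp
    hence "z = 1"
      unfolding z_def by simp
    thus ?thesis
      using True by (simp add: z_power)
  next
    case False
    have "z \<noteq> 1"
    proof
      assume "z = 1"
      then obtain t :: int where "2 * pi * real j / real d = real_of_int t * 2 * pi"
        by (auto simp: z_def complex_eq_iff cos_one_2pi_int)
      hence "real j = real d * real_of_int t"
        using d by (simp add: field_simps)
      hence "int j = int d * t"
        by (metis of_int_eq_iff of_int_mult of_int_of_nat_eq)
      with False show False
        by (metis dvd_triv_left int_dvd_int_iff)
    qed
    have "z ^ d = cis (2 * pi * real j)"
      using d by (simp add: z_def Complex.DeMoivre)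
    also have "\<dots> = 1"
      by (simp only: cis_multiple_2pi Ints_of_nat)
    finally have "(z - 1) * (\<Sum>l<d. z ^ l) = 0"
      by (simp add: power_diff_1_eq[symmetric])
    with \<open>z \<noteq> 1\<close> have "(\<Sum>l<d. z ^ l) = 0"
      by simp
    moreover have "(\<Sum>l=1..d. z ^ l) = z * (\<Sum>l<d. z ^ l)"
      by (simp add: sum_distrib_left sum.atLeast1_atMost_eq)
    ultimately show ?thesis
      using False by (simp add: z_power)
  qed
qed

lemma one_plus_cis: "1 + cis t = complex_of_real (2 * cos (t / 2)) * cis (t / 2)"
  using cos_double_cos[of "t / 2"] sin_double[of "t / 2"]
  by (simp add: complex_eq_iff power2_eq_square)

lemma sum_binomial_multiples:
  assumes d: "d > 0" and N: "N = d * q"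
  shows "(\<Sum>j=0..N. if d dvd j then real (N choose j) else 0) =
         2 ^ N / real d * (\<Sum>l=1..d. (-1) ^ (l * q) * cos (pi * real l / real d) ^ N)"
proof -
  define \<zeta> where "\<zeta> l = cis (2 * pi * real l / real d)" for l
  have "complex_of_real (real d * (\<Sum>j=0..N. if d dvd j then real (N choose j) else 0)) =
        (\<Sum>j=0..N. of_nat (N choose j) * (if d dvd j then of_nat d else 0))"
    by (simp add: sum_distrib_left mult_ac if_distrib cong: if_cong)
  also have "\<dots> = (\<Sum>j=0..N. of_nat (N choose j) * (\<Sum>l=1..d. cis (2 * pi * real l * real j / real d)))"
    by (simp only: sum_roots_unity_power_filter[OF d])
  also have "\<dots> = (\<Sum>l=1..d. \<Sum>j=0..N. of_nat (N choose j) * \<zeta> l ^ j * 1 ^ (N - j))"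
    by (simp add: \<zeta>_def Complex.DeMoivre sum_distrib_left mult_ac sum.swap[of _ "{0..N}"])
  also have "\<dots> = (\<Sum>l=1..d. (\<zeta> l + 1) ^ N)"
    by (simp add: binomial_ring atLeast0AtMost)
  also have "\<dots> = (\<Sum>l=1..d. complex_of_real ((-1) ^ (l * q) * (2 * cos (pi * real l / real d)) ^ N))"
  proof (intro sum.cong refl)
    fix l
    have "(\<zeta> l + 1) ^ N = complex_of_real ((2 * cos (pi * real l / real d)) ^ N) *
                            cis (real N * (pi * real l / real d))"
      using one_plus_cis[of "2 * pi * real l / real d"]
      by (simp add: \<zeta>_def add.commute power_mult_distrib Complex.DeMoivre)
    also have "real N * (pi * real l / real d) = real (l * q) * pi"
      using d by (simp add: N field_simps)
    also have "cis (real (l * q) * pi) = (-1) ^ (l * q)"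
      by (simp add: cis_multiple_2pi complex_eq_iff del: of_nat_mult)
    finally show "(\<zeta> l + 1) ^ N =
        complex_of_real ((-1) ^ (l * q) * (2 * cos (pi * real l / real d)) ^ N)"
      by simp
  qed
  also have "\<dots> = complex_of_real (2 ^ N * (\<Sum>l=1..d. (-1) ^ (l * q) * cos (pi * real l / real d) ^ N))"
    by (simp add: sum_distrib_left power_mult_distrib mult_ac)
  finally show ?thesis
    using d by (simp only: of_real_eq_iff) (simp add: field_simps)
qed

subsection \<open>Sums over multiples\<close>

lemma sum_if_dvd_reindex:
  fixes f :: "nat \<Rightarrow> 'a::comm_monoid_add"
  assumes "finite A" "d > 0" "{j\<in>A. d dvd j} = (\<lambda>l. d * l) ` B"
  shows "(\<Sum>j\<in>A. if d dvd j then f j else 0) = (\<Sum>l\<in>B. f (d * l))"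
proof -
  have "(\<Sum>j\<in>A. if d dvd j then f j else 0) = (\<Sum>j\<in>{j\<in>A. d dvd j}. f j)"
    by (rule sum.inter_filter[OF assms(1), symmetric])
  also have "\<dots> = (\<Sum>l\<in>B. f (d * l))"
    unfolding assms(3) using assms(2) by (subst sum.reindex) (auto simp: inj_on_def)
  finally show ?thesis .
qed

lemma sum_ln_Gamma_multiples:
  assumes "d > 0" "q > 0"
  shows "(\<Sum>j=1..d * q. if d dvd j then ln (Gamma (real j / real (d * q))) else 0) =
         (real q - 1) / 2 * ln (2 * pi) - ln (real q) / 2"
proof -
  have "(\<Sum>j=1..d * q. if d dvd j then ln (Gamma (real j / real (d * q))) else 0) =
        (\<Sum>l=1..q. ln (Gamma (real (d * l) / real (d * q))))"
    using assms(1) by (intro sum_if_dvd_reindex) (auto elim!: dvdE simp: image_iff)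
  also have "\<dots> = (\<Sum>l=1..q. ln (Gamma (real l / real q)))"
    using assms(1) by simp
  finally show ?thesis
    using sum_ln_Gamma_fractions[OF assms(2)] by simp
qed

lemma sum_bernpoly_multiples:
  assumes "d > 0" "q > 0"
  shows "(\<Sum>j=0..<d * q. if d dvd j then bernpoly m (real j / real (d * q)) else 0) =
         bernoulli m * real q powi (1 - int m)"
proof -
  have "(\<Sum>j=0..<d * q. if d dvd j then bernpoly m (real j / real (d * q)) else 0) =
        (\<Sum>l<q. bernpoly m (real (d * l) / real (d * q)))"
    using assms(1) by (intro sum_if_dvd_reindex) (auto elim!: dvdE simp: image_iff)
  also have "\<dots> = (\<Sum>l<q. bernpoly m (real l / real q))"
    using assms(1) by simp
  finally show ?thesis
    using sum_bernpoly_fractions[OF assms(2)] by simp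
qed

subsection \<open>Expanding \<open>P\<close> over tuples of divisors\<close>

lemma lcm_power_nat: "lcm (x ^ a) (y ^ a) = lcm x y ^ a" for x y :: nat
proof (cases "gcd x y = 0")
  case True
  thus ?thesis
    by (cases a) auto
next
  case False
  have "gcd x y ^ a * lcm (x ^ a) (y ^ a) = x ^ a * y ^ a"
    using prod_gcd_lcm_nat[of "x ^ a" "y ^ a"] by (simp add: gcd_exp)
  also have "\<dots> = gcd x y ^ a * lcm x y ^ a"
    by (metis power_mult_distrib prod_gcd_lcm_nat)
  finally show ?thesis
    using False by auto
qed

lemma Lcm_power_image_nat: "finite A \<Longrightarrow> Lcm ((\<lambda>x. x ^ a) ` A) = Lcm A ^ a" for A :: "nat set"
  by (induction A rule: finite_induct) (auto simp: lcm_power_nat)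

lemma powers_dvd_iff_Lcm_power_dvd:
  fixes A :: "nat set"
  assumes "finite A"
  shows "(\<forall>x\<in>A. x ^ a dvd j) \<longleftrightarrow> Lcm A ^ a dvd j"
proof
  assume "\<forall>x\<in>A. x ^ a dvd j"
  hence "Lcm ((\<lambda>x. x ^ a) ` A) dvd j"
    by (auto intro: Lcm_least)
  thus "Lcm A ^ a dvd j"
    by (simp add: Lcm_power_image_nat[OF assms])
next
  assume "Lcm A ^ a dvd j"
  moreover have "x ^ a dvd Lcm A ^ a" if "x \<in> A" for x
    using that by (intro dvd_power_same dvd_Lcm)
  ultimately show "\<forall>x\<in>A. x ^ a dvd j"
    using dvd_trans by blast
qed

locale divisor_tuples =
  fixes n a :: nat and k :: "nat \<Rightarrow> nat"
  assumes k_pos: "\<And>i. i \<in> {1..n} \<Longrightarrow> k i \<ge> 1"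
begin

abbreviation K :: nat where "K \<equiv> Lcm (k ` {1..n})"
abbreviation M :: "(nat \<Rightarrow> nat) \<Rightarrow> nat" where "M d \<equiv> Lcm (d ` {1..n})"
abbreviation L :: "(nat \<Rightarrow> nat) \<Rightarrow> nat" where "L d \<equiv> K div M d"
abbreviation D :: "(nat \<Rightarrow> nat) set" where "D \<equiv> divtuples n k"
abbreviation totient_prod :: "(nat \<Rightarrow> nat) \<Rightarrow> real" where
  "totient_prod d \<equiv> \<Prod>i=1..n. real (totient (d i))"

lemma finite_divisors_k: "i \<in> {1..n} \<Longrightarrow> finite {d. d dvd k i}"
  using k_pos by (intro finite_divisors_nat) (auto simp: Suc_le_eq)

lemma K_pos: "K > 0"
proof -
  have "0 \<notin> k ` {1..n}"
    using k_pos by force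
  thus ?thesis
    using Lcm_0_iff[of "k ` {1..n}"] by (simp add: neq0_conv[symmetric])
qed

lemma M_dvd_K:
  assumes "d \<in> D"
  shows "M d dvd K"
proof (rule Lcm_least)
  fix x assume "x \<in> d ` {1..n}"
  then obtain i where i: "i \<in> {1..n}" and x: "x = d i"
    by auto
  from assms i have "d i dvd k i"
    by (auto simp: divtuples_def PiE_iff)
  moreover have "k i dvd K"
    using i by (intro dvd_Lcm) auto
  ultimately show "x dvd K"
    unfolding x by (rule dvd_trans)
qed

lemma K_eq_M_mult_L: "d \<in> D \<Longrightarrow> K = M d * L d"
  using M_dvd_K by simp

lemma M_pos: "d \<in> D \<Longrightarrow> M d > 0"
  using K_eq_M_mult_L K_pos by (metis gr0I mult_eq_0_iff)

lemma L_pos: "d \<in> D \<Longrightarrow> L d > 0"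
  using K_eq_M_mult_L K_pos by (metis gr0I mult_eq_0_iff)

lemma K_power_eq: "d \<in> D \<Longrightarrow> K ^ a = M d ^ a * L d ^ a"
  using K_eq_M_mult_L by (metis power_mult_distrib)

lemma Pfun_eq_sum_divtuples:
  "real (Pfun n a k j) = (\<Sum>d\<in>D. totient_prod d * of_bool (M d ^ a dvd j))"
proof -
  have "real (Pfun n a k j) =
        (\<Prod>i=1..n. \<Sum>e\<in>{e. e dvd k i}. real (totient e) * of_bool (e ^ a dvd j))"
    unfolding Pfun_def of_nat_prod
  proof (intro prod.cong refl)
    fix i assume i: "i \<in> {1..n}"
    have "{e. e dvd k i \<and> e ^ a dvd j} = {e. e dvd k i} \<inter> {e. e ^ a dvd j}"
      by auto
    thus "real (\<Sum>e\<in>{e. e dvd k i \<and> e ^ a dvd j}. totient e) =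
          (\<Sum>e\<in>{e. e dvd k i}. real (totient e) * of_bool (e ^ a dvd j))"
      using finite_divisors_k[OF i] by (simp add: of_nat_sum)
  qed
  also have "\<dots> = (\<Sum>d\<in>D. \<Prod>i=1..n. real (totient (d i)) * of_bool (d i ^ a dvd j))"
    unfolding divtuples_def by (rule prod_sum_PiE) (auto intro: finite_divisors_k)
  also have "\<dots> = (\<Sum>d\<in>D. totient_prod d * of_bool (M d ^ a dvd j))"
  proof (intro sum.cong refl)
    fix d :: "nat \<Rightarrow> nat"
    have "(\<forall>x\<in>d ` {1..n}. x ^ a dvd j) \<longleftrightarrow> M d ^ a dvd j"
      by (intro powers_dvd_iff_Lcm_power_dvd) auto
    hence "(\<Prod>i=1..n. of_bool (d i ^ a dvd j) :: real) = of_bool (M d ^ a dvd j)"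
      by (auto simp: prod_zero_iff intro!: prod.neutral)
    thus "(\<Prod>i=1..n. real (totient (d i)) * of_bool (d i ^ a dvd j)) =
          totient_prod d * of_bool (M d ^ a dvd j)"
      by (simp add: prod.distrib)
  qed
  finally show ?thesis .
qed

lemma sum_totient_prod: "(\<Sum>d\<in>D. totient_prod d) = real (\<Prod>i=1..n. k i)"
proof -
  have "(\<Sum>d\<in>D. totient_prod d) = (\<Prod>i=1..n. \<Sum>e\<in>{e. e dvd k i}. real (totient e))"
    unfolding divtuples_def by (rule prod_sum_PiE[symmetric]) (auto intro: finite_divisors_k)
  also have "\<dots> = (\<Prod>i=1..n. real (k i))"
    by (simp flip: of_nat_sum add: totient_divisor_sum)
  finally show ?thesis
    by simp
qed

lemma sum_times_Pfun:
  assumes "finite J"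
  shows "(\<Sum>j\<in>J. f j * real (Pfun n a k j)) =
         (\<Sum>d\<in>D. totient_prod d * (\<Sum>j\<in>J. if M d ^ a dvd j then f j else 0))"
  unfolding Pfun_eq_sum_divtuples sum_distrib_left
  by (subst sum.swap) (auto intro!: sum.cong)

lemma sum_ln_Gamma_Pfun:
  "(\<Sum>j=1..K^a. ln (Gamma (real j / real (K^a))) * real (Pfun n a k j)) =
     real (K^a) / 2 * ln (2 * pi) * (\<Sum>d\<in>D. totient_prod d / real (M d) ^ a)
     - real (\<Prod>i=1..n. k i) / 2 * ln (2 * pi * real (K^a))
     + real a / 2 * (\<Sum>d\<in>D. ln (real (M d)) * totient_prod d)"
  (is "?lhs = ?rhs")
proof -
  have rearrange:
    "t * ((y ^ a - 1) / 2 * ln (2 * pi) - ln (y ^ a) / 2) =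
     x ^ a * y ^ a / 2 * ln (2 * pi) * (t / x ^ a) - t / 2 * ln (2 * pi * (x ^ a * y ^ a))
     + real a / 2 * (ln x * t)" if "x > 0" "y > 0" for x y t :: real
  proof -
    have "ln (2 * pi * (x ^ a * y ^ a)) = ln (2 * pi) + real a * ln x + real a * ln y"
      using that by (simp add: ln_mult ln_realpow)
    thus ?thesis
      using that by (simp add: ln_realpow field_simps)
  qed
  have "totient_prod d * (\<Sum>j=1..K^a. if M d ^ a dvd j then ln (Gamma (real j / real (K^a))) else 0) =
        real (K^a) / 2 * ln (2 * pi) * (totient_prod d / real (M d) ^ a)
        - totient_prod d / 2 * ln (2 * pi * real (K^a))
        + real a / 2 * (ln (real (M d)) * totient_prod d)" if d: "d \<in> D" for d
  proof -
    have "real (M d) > 0" "real (L d) > 0"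
      using M_pos[OF d] L_pos[OF d] by simp_all
    note rearrange[OF this, of "totient_prod d"]
    thus ?thesis
      unfolding K_power_eq[OF d]
        sum_ln_Gamma_multiples[OF M_pos[OF d, THEN zero_less_power] L_pos[OF d, THEN zero_less_power]]
      by simp
  qed
  hence "?lhs = (\<Sum>d\<in>D. real (K^a) / 2 * ln (2 * pi) * (totient_prod d / real (M d) ^ a)
                  - totient_prod d / 2 * ln (2 * pi * real (K^a))
                  + real a / 2 * (ln (real (M d)) * totient_prod d))"
    unfolding sum_times_Pfun[OF finite_atLeastAtMost] by (rule sum.cong[OF refl])
  also have "\<dots> = ?rhs"
    by (simp only: sum.distrib sum_subtractf sum_distrib_left sum_distrib_right sum_divide_distrib
        sum_totient_prod[symmetric])
  finally show ?thesis .
qed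

lemma sum_binomial_Pfun:
  "(\<Sum>j=0..K^a. real (K^a choose j) * real (Pfun n a k j)) =
     2 ^ (K^a) * (\<Sum>d\<in>D. totient_prod d / real (M d) ^ a *
        (\<Sum>l=1..M d ^ a. (-1) ^ (l * L d ^ a) * cos (pi * real l / real (M d ^ a)) ^ (K^a)))"
  (is "?lhs = 2 ^ (K^a) * (\<Sum>d\<in>D. ?term d)")
proof -
  have "totient_prod d * (\<Sum>j=0..K^a. if M d ^ a dvd j then real (K^a choose j) else 0) =
        2 ^ (K^a) * ?term d" if d: "d \<in> D" for d
    unfolding sum_binomial_multiples[OF M_pos[OF d, THEN zero_less_power] K_power_eq[OF d]] by simp
  hence "?lhs = (\<Sum>d\<in>D. 2 ^ (K^a) * ?term d)"
    unfolding sum_times_Pfun[OF finite_atLeastAtMost] by (rule sum.cong[OF refl])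
  thus ?thesis
    by (simp only: sum_distrib_left)
qed

lemma sum_bernpoly_Pfun:
  "(\<Sum>j=0..<K^a. bernpoly m (real j / real (K^a)) * real (Pfun n a k j)) =
     bernoulli m / real K powi (int a * (int m - 1)) *
     (\<Sum>d\<in>D. real (M d) powi (int a * (int m - 1)) * totient_prod d)"
  (is "?lhs = ?c * (\<Sum>d\<in>D. ?term d)")
proof -
  let ?e = "int a * (int m - 1)"
  have "totient_prod d * (\<Sum>j=0..<K^a. if M d ^ a dvd j then bernpoly m (real j / real (K^a)) else 0) =
        ?c * ?term d" if d: "d \<in> D" for d
  proof -
    have "real (L d ^ a) powi (1 - int m) = inverse (real (L d) powi ?e)"
      by (simp add: power_int_power power_int_minus[symmetric] algebra_simps)
    also have "real K = real (M d) * real (L d)"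
      using K_eq_M_mult_L[OF d] by (metis of_nat_mult)
    hence "inverse (real (L d) powi ?e) = real (M d) powi ?e / real K powi ?e"
      using M_pos[OF d] by (simp add: power_int_mult_distrib field_simps)
    finally show ?thesis
      unfolding K_power_eq[OF d]
        sum_bernpoly_multiples[OF M_pos[OF d, THEN zero_less_power] L_pos[OF d, THEN zero_less_power]]
      by simp
  qed
  hence "?lhs = (\<Sum>d\<in>D. ?c * ?term d)"
    unfolding sum_times_Pfun[OF finite_atLeastLessThan] by (rule sum.cong[OF refl])
  thus ?thesis
    by (simp only: sum_distrib_left)
qed

lemma sum_bernpoly_one_Pfun:
  "(\<Sum>j=0..<K^a. bernpoly 1 (real j / real (K^a)) * real (Pfun n a k j)) = - real (\<Prod>i=1..n. k i) / 2"
  using sum_bernpoly_Pfun[of 1] bernoulli_one sum_totient_prod by simp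

end

theorem mainTheorem13:
  fixes n a :: nat and k :: "nat \<Rightarrow> nat"
  assumes "n \<ge> 1" and "a \<ge> 2" and "\<And>i. i \<in> {1..n} \<Longrightarrow> k i \<ge> 1"
  defines "K \<equiv> Lcm (k ` {1..n})"
  defines "M \<equiv> (\<lambda>d::nat \<Rightarrow> nat. Lcm (d ` {1..n}))"
  defines "L \<equiv> (\<lambda>d::nat \<Rightarrow> nat. K div M d)"
  defines "P \<equiv> Pfun n a k"
  defines "D \<equiv> divtuples n k"
  shows
    "((\<Sum>j=1..K^a. ln (Gamma (real j / real (K^a))) * real (P j)) =
       real (K^a) / 2 * ln (2 * pi) * (\<Sum>d\<in>D. (\<Prod>i=1..n. real (totient (d i))) / real (M d) ^ a)
       - real (\<Prod>i=1..n. k i) / 2 * ln (2 * pi * real (K^a))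
       + real a / 2 * (\<Sum>d\<in>D. ln (real (M d)) * (\<Prod>i=1..n. real (totient (d i))))) \<and>
    ((\<Sum>j=0..K^a. real (K^a choose j) * real (P j)) =
       2 ^ (K^a) * (\<Sum>d\<in>D. (\<Prod>i=1..n. real (totient (d i))) / real (M d) ^ a *
          (\<Sum>l=1..M d ^ a. (-1) ^ (l * L d ^ a) * cos (pi * real l / real (M d ^ a)) ^ (K^a)))) \<and>
    (\<forall>m::nat. (\<Sum>j=0..<K^a. bernpoly m (real j / real (K^a)) * real (P j)) =
       bernoulli m / real K powi (int a * (int m - 1)) *
       (\<Sum>d\<in>D. real (M d) powi (int a * (int m - 1)) * (\<Prod>i=1..n. real (totient (d i))))) \<and>
    ((\<Sum>j=0..<K^a. bernpoly 1 (real j / real (K^a)) * real (P j)) = - real (\<Prod>i=1..n. k i) / 2)"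
proof -
  interpret divisor_tuples n a k
    using assms(3) by unfold_locales
  show ?thesis
    unfolding K_def M_def L_def P_def D_def
    using sum_ln_Gamma_Pfun sum_binomial_Pfun sum_bernpoly_Pfun sum_bernpoly_one_Pfun by blast
qed

end
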